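(* Let $n\geq 1$. There is a bijection $\phi$ from the set of functions $f\colon[n+1]\to[n]$ to the set of triply rooted trees on $[n]$ such that, for every such $f$: (i) the orbit of $n+1$ under $f$ with $n+1$ itself removed, i.e. $\{f(n+1),f^2(n+1),\dots\}$, is equal to the set of ancestors of the second root of $\phi(f)$; and (ii) the set of periodic points of $f$ is equal to the set of ancestors of the third root of $\phi(f)$.
   Context: $[m]=\{1,\dots,m\}$. A triply rooted tree on $[n]$ is a labeled tree with vertex set $[n]$ together with three distinguished vertices $r_1,r_2,r_3$ (first, second, third root), not necessarily distinct. Ancestors are taken with respect to the first root: a vertex $u$ is an ancestor of $v$ if $u$ lies on the unique path from $r_1$ to $v$ (in particular $v$ is an ancestor of itself and $r_1$ is an ancestor of every vertex). For $f\colon[n+1]\to[n]$, the orbit of $x$ is $\{x,f(x),f^2(x),\dots\}$ (where $f$ is iterated, which makes sense since $[n]\subseteq[n+1]$), and $x$ is a periodic point of $f$ if $f^j(x)=x$ for some $j\geq 1$. *)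

theory Defs
  imports "HOL-Library.FuncSet"
begin

definition walk_adj :: "nat set set \<Rightarrow> nat list \<Rightarrow> bool" where
  "walk_adj E p \<longleftrightarrow> (\<forall>i. Suc i < length p \<longrightarrow> {p ! i, p ! Suc i} \<in> E)"

definition is_path :: "nat set set \<Rightarrow> nat list \<Rightarrow> bool" where
  "is_path E p \<longleftrightarrow> p \<noteq> [] \<and> distinct p \<and> walk_adj E p"

definition is_cycle :: "nat set set \<Rightarrow> nat list \<Rightarrow> bool" where
  "is_cycle E p \<longleftrightarrow> length p \<ge> 3 \<and> distinct p \<and> walk_adj E p \<and> {last p, hd p} \<in> E"

definition is_tree :: "nat set \<Rightarrow> nat set set \<Rightarrow> bool" where
  "is_tree V E \<longleftrightarrow>
     (\<forall>e\<in>E. e \<subseteq> V \<and> card e = 2) \<and>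
     (\<forall>u\<in>V. \<forall>v\<in>V. \<exists>p. is_path E p \<and> hd p = u \<and> last p = v) \<and>
     (\<nexists>p. is_cycle E p)"

definition ancestors :: "nat set set \<Rightarrow> nat \<Rightarrow> nat \<Rightarrow> nat set" where
  "ancestors E r v = {u. \<exists>p. is_path E p \<and> hd p = r \<and> last p = v \<and> u \<in> set p}"

definition triply_rooted_trees :: "nat \<Rightarrow> (nat set set \<times> nat \<times> nat \<times> nat) set" where
  "triply_rooted_trees n = {(E, r1, r2, r3). is_tree {1..n} E \<and>
      r1 \<in> {1..n} \<and> r2 \<in> {1..n} \<and> r3 \<in> {1..n}}"

definition funs :: "nat \<Rightarrow> (nat \<Rightarrow> nat) set" where
  "funs n = {1..n+1} \<rightarrow>\<^sub>E {1..n}"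

definition orbit_tail :: "(nat \<Rightarrow> nat) \<Rightarrow> nat \<Rightarrow> nat set" where
  "orbit_tail f x = {(f ^^ k) x | k. k \<ge> 1}"

definition periodic_points :: "nat \<Rightarrow> (nat \<Rightarrow> nat) \<Rightarrow> nat set" where
  "periodic_points n f = {x \<in> {1..n+1}. \<exists>j\<ge>1. (f ^^ j) x = x}"

end

(* A triply rooted tree on [n] with first root r1 is the same as a parent function p on [n]
   (p r1 = r1, every vertex reaches r1 by iterating p) together with two further vertices r2, r3,
   and the ancestors of v are then the p-orbit of v.  So it suffices to match functions
   f : [n+1] -> [n] with triples (p, r1, r2, r3) such that the f-orbit of f(n+1) is the p-orbit of r2
   and the periodic points of f form the p-orbit of r3.
   Put r2 = f(n+1).  Its f-orbit is a tail followed by a cycle c, f c, ..., r1 with f r1 = c.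
   Let x_1 < ... < x_k be the periodic points of f off this cycle; f permutes them.  Let p follow
   f everywhere except that p r1 = r1 and p runs along f x_1, ..., f x_k, c, and put r3 = f x_1
   (r3 = c if k = 0).  Conversely, the cycle is the common part of the paths from r2 and r3 to r1,
   and the rest of the path from r3 is the list f x_1, ..., f x_k, from which f is recovered on
   the x_i because they are its entries in increasing order. *)

theory Submission
  imports Defs
begin

section \<open>Walks and paths\<close>

lemma walk_adj_Nil [simp]: "walk_adj E []"
  and walk_adj_singleton [simp]: "walk_adj E [x]"
  by (simp_all add: walk_adj_def)

lemma walk_adj_Cons_Cons [simp]:
  "walk_adj E (x # y # xs) \<longleftrightarrow> {x, y} \<in> E \<and> walk_adj E (y # xs)"
  unfolding walk_adj_def by (auto simp: nth_Cons split: nat.splits)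

lemma walk_adj_append_Cons:
  "walk_adj E (xs @ a # ys) \<longleftrightarrow> walk_adj E (xs @ [a]) \<and> walk_adj E (a # ys)"
proof (induction xs)
  case (Cons x xs)
  then show ?case by (cases xs) auto
qed simp

lemma walk_adj_rev [simp]: "walk_adj E (rev xs) \<longleftrightarrow> walk_adj E xs"
proof -
  have "walk_adj E xs" if "walk_adj E (rev xs)" for xs
    unfolding walk_adj_def
  proof (intro allI impI)
    fix i assume i: "Suc i < length xs"
    have "{rev xs ! (length xs - Suc (Suc i)), rev xs ! Suc (length xs - Suc (Suc i))} \<in> E"
      using that i unfolding walk_adj_def by simp
    then show "{xs ! i, xs ! Suc i} \<in> E"
      using i by (simp add: rev_nth Suc_diff_Suc insert_commute)
  qed
  from this[of xs] this[of "rev xs"] show ?thesis by auto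
qed

lemma walk_adj_take: "walk_adj E xs \<Longrightarrow> walk_adj E (take k xs)"
  and walk_adj_drop: "walk_adj E xs \<Longrightarrow> walk_adj E (drop k xs)"
  and walk_adj_mono: "walk_adj E xs \<Longrightarrow> E \<subseteq> F \<Longrightarrow> walk_adj F xs"
  unfolding walk_adj_def by auto

text \<open>Cutting out the segment between two occurrences of a vertex shortens a walk.\<close>

lemma walk_adj_imp_path:
  assumes "walk_adj E w" "w \<noteq> []"
  shows "\<exists>q. is_path E q \<and> hd q = hd w \<and> last q = last w"
  using assms
proof (induction w rule: length_induct)
  case (1 w)
  show ?case
  proof (cases "distinct w")
    case True
    then show ?thesis using 1 by (auto simp: is_path_def)
  next
    case False
    then obtain i j where ij: "i < j" "j < length w" "w ! i = w ! j"
      by (metis distinct_conv_nth linorder_neqE_nat)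
    define w' where "w' = take i w @ drop j w"
    have drop_j: "drop j w = w ! j # drop (Suc j) w"
      using ij by (simp add: Cons_nth_drop_Suc)
    have "walk_adj E (take i w @ [w ! i])"
      using walk_adj_take[OF "1.prems"(1), of "Suc i"] ij by (simp add: take_Suc_conv_app_nth)
    moreover have "walk_adj E (w ! j # drop (Suc j) w)"
      using walk_adj_drop[OF "1.prems"(1), of j] drop_j by simp
    ultimately have "walk_adj E w'"
      using ij(3) walk_adj_append_Cons[of E "take i w" "w ! j" "drop (Suc j) w"]
      by (simp add: w'_def drop_j)
    moreover have "length w' < length w" "w' \<noteq> []"
      using ij drop_j by (simp_all add: w'_def)
    ultimately obtain q where "is_path E q" "hd q = hd w'" "last q = last w'"
      using "1.IH" by blast
    moreover have "hd w' = hd w"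
      using ij "1.prems"(2) drop_j by (cases i) (auto simp: w'_def hd_conv_nth nth_append)
    moreover have "last w' = last w"
      using ij by (simp add: w'_def)
    ultimately show ?thesis by auto
  qed
qed

section \<open>Iterates of a function\<close>

lemma funpow_apply_add: "(g ^^ i) ((g ^^ j) x) = (g ^^ (i + j)) x"
  by (simp add: funpow_add)

lemma funpow_apply_Suc_right: "(g ^^ i) (g x) = (g ^^ Suc i) x"
  by (simp add: funpow_swap1)

definition forward_orbit :: "('a \<Rightarrow> 'a) \<Rightarrow> 'a \<Rightarrow> 'a set" where
  "forward_orbit g x = range (\<lambda>k. (g ^^ k) x)"

lemma mem_forward_orbit_iff: "y \<in> forward_orbit g x \<longleftrightarrow> (\<exists>k. (g ^^ k) x = y)"
  unfolding forward_orbit_def by auto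

lemma forward_orbit_closed: "y \<in> forward_orbit g x \<Longrightarrow> g y \<in> forward_orbit g x"
  unfolding mem_forward_orbit_iff by (metis funpow.simps(2) o_apply)

lemma self_in_forward_orbit: "x \<in> forward_orbit g x"
  unfolding forward_orbit_def by (rule range_eqI[of _ _ 0]) simp

lemma forward_orbit_step: "forward_orbit g x = insert x (forward_orbit g (g x))"
proof -
  have "range h = insert (h 0) (range (\<lambda>k. h (Suc k)))" for h :: "nat \<Rightarrow> 'a"
    by (auto simp: image_iff) (metis not0_implies_Suc)
  from this[of "\<lambda>k. (g ^^ k) x"] show ?thesis
    unfolding forward_orbit_def by (simp add: funpow_apply_Suc_right del: funpow.simps)
qed

definition follows :: "('a \<Rightarrow> 'a) \<Rightarrow> 'a list \<Rightarrow> bool" where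
  "follows g xs \<longleftrightarrow> (\<forall>i. Suc i < length xs \<longrightarrow> g (xs ! i) = xs ! Suc i)"

lemma follows_Nil [simp]: "follows g []"
  and follows_singleton [simp]: "follows g [x]"
  by (simp_all add: follows_def)

lemma follows_Cons_Cons [simp]: "follows g (x # y # xs) \<longleftrightarrow> g x = y \<and> follows g (y # xs)"
  unfolding follows_def by (auto simp: nth_Cons split: nat.splits)

lemma follows_funpow:
  "follows g xs \<Longrightarrow> i + j < length xs \<Longrightarrow> (g ^^ j) (xs ! i) = xs ! (i + j)"
  by (induction j) (auto simp: follows_def)

lemma follows_funpow_hd:
  "follows g xs \<Longrightarrow> j < length xs \<Longrightarrow> (g ^^ j) (hd xs) = xs ! j"
  using follows_funpow[of g xs 0 j] by (cases xs) auto

lemma follows_cong: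
  "follows g xs \<Longrightarrow> (\<And>i. Suc i < length xs \<Longrightarrow> h (xs ! i) = g (xs ! i)) \<Longrightarrow> follows h xs"
  unfolding follows_def by simp

lemma follows_cong_distinct:
  assumes "follows g xs" "distinct xs" "\<And>x. x \<in> set xs \<Longrightarrow> x \<noteq> last xs \<Longrightarrow> h x = g x"
  shows "follows h xs"
proof (rule follows_cong[OF assms(1)])
  fix i assume i: "Suc i < length xs"
  then have "xs ! i \<noteq> xs ! (length xs - 1)"
    using nth_eq_iff_index_eq[OF assms(2), of i "length xs - 1"] by simp
  moreover have "xs \<noteq> []" "xs ! i \<in> set xs"
    using i by auto
  ultimately show "h (xs ! i) = g (xs ! i)"
    using assms(3)[of "xs ! i"] by (simp add: last_conv_nth)
qed

lemma follows_append:
  "follows g (xs @ ys) \<longleftrightarrow>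
     follows g xs \<and> follows g ys \<and> (xs \<noteq> [] \<longrightarrow> ys \<noteq> [] \<longrightarrow> g (last xs) = hd ys)"
proof (induction xs)
  case (Cons x xs)
  then show ?case by (cases xs; cases ys) auto
qed simp

lemma follows_reaches_last:
  assumes "follows g xs" "x \<in> set xs"
  shows "\<exists>k. (g ^^ k) x = last xs"
proof -
  obtain i where i: "i < length xs" "x = xs ! i"
    using assms(2) by (auto simp: in_set_conv_nth)
  moreover have "xs \<noteq> []"
    using i by auto
  ultimately have "(g ^^ (length xs - 1 - i)) x = last xs"
    using follows_funpow[OF assms(1), of i] by (auto simp: last_conv_nth)
  then show ?thesis ..
qed

lemma forward_orbit_follows:
  assumes "follows g xs" "xs \<noteq> []" "g (last xs) \<in> set xs"
  shows "forward_orbit g (hd xs) = set xs"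
proof
  have closed: "g x \<in> set xs" if x: "x \<in> set xs" for x
  proof -
    obtain i where i: "i < length xs" "x = xs ! i"
      using x by (auto simp: in_set_conv_nth)
    show ?thesis
    proof (cases "Suc i < length xs")
      case True
      then show ?thesis using assms(1) i by (simp add: follows_def)
    next
      case False
      then have "i = length xs - 1"
        using i(1) by simp
      then have "x = last xs"
        using i(2) assms(2) by (simp add: last_conv_nth)
      then show ?thesis using assms(3) by simp
    qed
  qed
  have "(g ^^ k) (hd xs) \<in> set xs" for k
    by (induction k) (simp_all add: assms(2) closed)
  then show "forward_orbit g (hd xs) \<subseteq> set xs"
    unfolding forward_orbit_def by auto
  show "set xs \<subseteq> forward_orbit g (hd xs)"
  proof
    fix x assume "x \<in> set xs"
    then obtain k where "k < length xs" "x = xs ! k"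
      by (auto simp: in_set_conv_nth)
    then have "x = (g ^^ k) (hd xs)"
      using follows_funpow_hd[OF assms(1)] by simp
    then show "x \<in> forward_orbit g (hd xs)"
      unfolding forward_orbit_def by simp
  qed
qed

lemma orbit_tail_eq_forward_orbit: "orbit_tail g x = forward_orbit g (g x)"
proof (rule set_eqI)
  fix y
  have "(\<exists>k\<ge>1. (g ^^ k) x = y) \<longleftrightarrow> (\<exists>k. (g ^^ k) (g x) = y)"
  proof
    assume "\<exists>k\<ge>1. (g ^^ k) x = y"
    then obtain k where "k \<ge> 1" "(g ^^ k) x = y"
      by blast
    then have "(g ^^ (k - 1)) (g x) = y"
      by (simp add: funpow_apply_Suc_right del: funpow.simps)
    then show "\<exists>k. (g ^^ k) (g x) = y" ..
  next
    assume "\<exists>k. (g ^^ k) (g x) = y"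
    then obtain k where "(g ^^ k) (g x) = y" ..
    then have "(g ^^ Suc k) x = y"
      by (simp add: funpow_apply_Suc_right del: funpow.simps)
    then show "\<exists>k\<ge>1. (g ^^ k) x = y"
      by (intro exI[of _ "Suc k"]) simp
  qed
  moreover have "y \<in> orbit_tail g x \<longleftrightarrow> (\<exists>k\<ge>1. (g ^^ k) x = y)"
    unfolding orbit_tail_def by auto
  ultimately show "y \<in> orbit_tail g x \<longleftrightarrow> y \<in> forward_orbit g (g x)"
    by (simp add: mem_forward_orbit_iff)
qed

definition successor :: "'a list \<Rightarrow> 'a \<Rightarrow> 'a \<Rightarrow> 'a" where
  "successor xs d x = the (map_of (zip xs (tl xs @ [d])) x)"

lemma successor_nth:
  assumes "distinct xs" "i < length xs"
  shows "successor xs d (xs ! i) = (if Suc i < length xs then xs ! Suc i else d)"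
proof -
  have "length xs = length (tl xs @ [d])"
    using assms(2) by simp
  then have "map_of (zip xs (tl xs @ [d])) (xs ! i) = Some ((tl xs @ [d]) ! i)"
    using map_of_zip_nth assms by metis
  moreover have "(tl xs @ [d]) ! i = (if Suc i < length xs then xs ! Suc i else d)"
  proof (cases "Suc i < length xs")
    case True
    then have "i < length (tl xs)" by simp
    then show ?thesis using True by (simp add: nth_append nth_tl)
  next
    case False
    then have "i = length (tl xs)" using assms(2) by simp
    then show ?thesis using False by (simp only: nth_append_length) simp
  qed
  ultimately show ?thesis
    by (simp add: successor_def)
qed

lemma follows_successor: "distinct xs \<Longrightarrow> follows (successor xs d) xs"
  by (auto simp: follows_def successor_nth)

lemma successor_last: "distinct xs \<Longrightarrow> xs \<noteq> [] \<Longrightarrow> successor xs d (last xs) = d"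
  using successor_nth[of xs "length xs - 1" d] by (simp add: last_conv_nth)

lemma successor_in:
  assumes "distinct xs" "x \<in> set xs"
  shows "successor xs d x \<in> insert d (set xs)"
proof -
  obtain i where "i < length xs" "x = xs ! i"
    using assms(2) by (auto simp: in_set_conv_nth)
  then show ?thesis
    using successor_nth[OF assms(1)] by auto
qed

section \<open>Rooted trees as parent functions\<close>

definition root_dist :: "'a \<Rightarrow> ('a \<Rightarrow> 'a) \<Rightarrow> 'a \<Rightarrow> nat" where
  "root_dist r p v = (LEAST k. (p ^^ k) v = r)"

definition path_to_root :: "'a \<Rightarrow> ('a \<Rightarrow> 'a) \<Rightarrow> 'a \<Rightarrow> 'a list" where
  "path_to_root r p v = map (\<lambda>i. (p ^^ i) v) [0..<Suc (root_dist r p v)]"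

definition parent_edges :: "nat set \<Rightarrow> nat \<Rightarrow> (nat \<Rightarrow> nat) \<Rightarrow> nat set set" where
  "parent_edges V r p = {{v, p v} | v. v \<in> V \<and> v \<noteq> r}"

locale parent_fun =
  fixes V :: "nat set" and r :: nat and p :: "nat \<Rightarrow> nat"
  assumes root_in: "r \<in> V"
    and parent_in: "\<And>v. v \<in> V \<Longrightarrow> p v \<in> V"
    and parent_root: "p r = r"
    and reaches_root: "\<And>v. v \<in> V \<Longrightarrow> \<exists>k. (p ^^ k) v = r"
begin

abbreviation depth :: "nat \<Rightarrow> nat" where
  "depth \<equiv> root_dist r p"

lemma funpow_in: "v \<in> V \<Longrightarrow> (p ^^ k) v \<in> V"
  by (induction k) (auto simp: parent_in)

lemma funpow_root: "(p ^^ k) r = r"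
  by (induction k) (auto simp: parent_root)

lemma funpow_depth: "v \<in> V \<Longrightarrow> (p ^^ depth v) v = r"
  unfolding root_dist_def using reaches_root by (rule LeastI_ex)

lemma depth_le: "(p ^^ k) v = r \<Longrightarrow> depth v \<le> k"
  unfolding root_dist_def by (rule Least_le)

lemma funpow_beyond_depth:
  assumes "v \<in> V" "depth v \<le> k"
  shows "(p ^^ k) v = r"
proof -
  have "(p ^^ k) v = (p ^^ (k - depth v)) ((p ^^ depth v) v)"
    using assms(2) by (simp add: funpow_apply_add)
  then show ?thesis
    using funpow_depth[OF assms(1)] funpow_root by simp
qed

lemma depth_funpow:
  assumes "v \<in> V" "i \<le> depth v"
  shows "depth ((p ^^ i) v) = depth v - i"
proof (rule antisym)
  show "depth ((p ^^ i) v) \<le> depth v - i"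
    using funpow_depth[OF assms(1)] assms(2) by (intro depth_le) (simp add: funpow_apply_add)
  have "(p ^^ (depth ((p ^^ i) v) + i)) v = r"
    using funpow_depth[OF funpow_in[OF assms(1)]] by (simp add: funpow_apply_add)
  then show "depth v - i \<le> depth ((p ^^ i) v)"
    using depth_le by fastforce
qed

lemma depth_eq_0_iff: "v \<in> V \<Longrightarrow> depth v = 0 \<longleftrightarrow> v = r"
  using funpow_depth[of v] depth_le[of 0 r] by auto

lemma depth_parent:
  assumes "v \<in> V" "v \<noteq> r"
  shows "depth (p v) < depth v"
  using depth_funpow[OF assms(1), of 1] depth_eq_0_iff[OF assms(1)] assms(2) by simp

lemma funpow_eq_self_imp_root:
  assumes "v \<in> V" "(p ^^ j) v = v" "j \<ge> 1"
  shows "v = r"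
proof (cases "j \<le> depth v")
  case True
  then have "depth v = depth v - j"
    using depth_funpow[OF assms(1) True] assms(2) by simp
  then show ?thesis
    using depth_eq_0_iff[OF assms(1)] True assms(3) by simp
next
  case False
  then show ?thesis
    using funpow_beyond_depth[OF assms(1)] assms(2) by simp
qed

lemma length_path_to_root: "length (path_to_root r p v) = Suc (depth v)"
  by (simp add: path_to_root_def)

lemma nth_path_to_root: "i \<le> depth v \<Longrightarrow> path_to_root r p v ! i = (p ^^ i) v"
  by (simp add: path_to_root_def nth_map_upt del: upt_Suc)

lemma path_to_root_ne: "path_to_root r p v \<noteq> []"
  by (simp add: path_to_root_def)

lemma hd_path_to_root: "hd (path_to_root r p v) = v"
  by (simp add: path_to_root_def hd_map upt_rec del: upt_Suc)

lemma last_path_to_root: "v \<in> V \<Longrightarrow> last (path_to_root r p v) = r"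
  by (simp add: path_to_root_def last_map funpow_depth)

lemma follows_path_to_root: "follows p (path_to_root r p v)"
  by (simp add: follows_def length_path_to_root nth_path_to_root)

lemma distinct_path_to_root:
  assumes "v \<in> V"
  shows "distinct (path_to_root r p v)"
  unfolding distinct_conv_nth length_path_to_root
proof (intro allI impI)
  fix i j assume "i < Suc (depth v)" "j < Suc (depth v)" "i \<noteq> j"
  then have "depth ((p ^^ i) v) \<noteq> depth ((p ^^ j) v)"
    using depth_funpow[OF assms] by auto
  then show "path_to_root r p v ! i \<noteq> path_to_root r p v ! j"
    using \<open>i < Suc (depth v)\<close> \<open>j < Suc (depth v)\<close> by (auto simp: nth_path_to_root)
qed

lemma set_path_to_root:
  assumes "v \<in> V"
  shows "set (path_to_root r p v) = forward_orbit p v"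
proof -
  have "p (last (path_to_root r p v)) \<in> set (path_to_root r p v)"
    using last_path_to_root[OF assms] path_to_root_ne[of v] parent_root by (metis last_in_set)
  from forward_orbit_follows[OF follows_path_to_root path_to_root_ne this] show ?thesis
    by (simp add: hd_path_to_root)
qed

lemma forward_orbit_in: "v \<in> V \<Longrightarrow> forward_orbit p v \<subseteq> V"
  unfolding forward_orbit_def using funpow_in by auto

lemma forward_orbit_root: "forward_orbit p r = {r}"
  unfolding forward_orbit_def using funpow_root by auto

lemma drop_path_to_root:
  assumes "v \<in> V" "i \<le> depth v"
  shows "drop i (path_to_root r p v) = path_to_root r p ((p ^^ i) v)"
proof (rule nth_equalityI)
  show "length (drop i (path_to_root r p v)) = length (path_to_root r p ((p ^^ i) v))"
    using depth_funpow[OF assms] assms(2) by (simp add: length_path_to_root)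
next
  fix j assume "j < length (drop i (path_to_root r p v))"
  then have "i + j \<le> depth v"
    by (simp add: length_path_to_root)
  then show "drop i (path_to_root r p v) ! j = path_to_root r p ((p ^^ i) v) ! j"
    using depth_funpow[OF assms]
    by (simp add: nth_path_to_root length_path_to_root funpow_apply_add add.commute)
qed

lemma path_to_root_suffix:
  assumes "v \<in> V" "path_to_root r p v = xs @ ys" "ys \<noteq> []"
  shows "ys = path_to_root r p (hd ys)"
proof -
  have "length xs \<le> depth v"
    using assms(2,3) length_path_to_root[of v] by (cases ys) auto
  moreover have "ys = drop (length xs) (path_to_root r p v)"
    using assms(2) by simp
  ultimately have "ys = path_to_root r p ((p ^^ length xs) v)"
    using drop_path_to_root[OF assms(1)] by simp
  then show ?thesis
    using hd_path_to_root by metis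
qed

lemma path_to_root_through:
  assumes "v \<in> V" "x \<in> set (path_to_root r p v)"
  shows "\<exists>xs. path_to_root r p v = xs @ path_to_root r p x"
proof -
  obtain i where "i \<le> depth v" "x = (p ^^ i) v"
    using assms(2) by (auto simp: in_set_conv_nth length_path_to_root nth_path_to_root less_Suc_eq_le)
  then have "path_to_root r p v = take i (path_to_root r p v) @ path_to_root r p x"
    using drop_path_to_root[OF assms(1)] by (metis append_take_drop_id)
  then show ?thesis ..
qed

lemma path_to_root_unique:
  assumes "follows p xs" "distinct xs" "xs \<noteq> []" "last xs = r" "hd xs \<in> V"
  shows "path_to_root r p (hd xs) = xs"
proof -
  let ?v = "hd xs"
  have iter: "(p ^^ i) ?v = xs ! i" if "i < length xs" for i
    using follows_funpow_hd[OF assms(1) that] .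
  have last: "xs ! (length xs - 1) = r"
    using assms(3,4) by (simp add: last_conv_nth)
  have "depth ?v = length xs - 1"
  proof (rule antisym)
    show "depth ?v \<le> length xs - 1"
      using iter[of "length xs - 1"] last assms(3) by (intro depth_le) simp
    show "length xs - 1 \<le> depth ?v"
    proof (rule ccontr)
      assume less: "\<not> length xs - 1 \<le> depth ?v"
      then have "xs ! depth ?v = xs ! (length xs - 1)"
        using iter[of "depth ?v"] funpow_depth[OF assms(5)] last by simp
      then show False
        using nth_eq_iff_index_eq[OF assms(2)] less by fastforce
    qed
  qed
  then show ?thesis
    using assms(3) iter
    by (intro nth_equalityI) (auto simp: length_path_to_root nth_path_to_root)
qed

lemma parent_edge: "v \<in> V \<Longrightarrow> v \<noteq> r \<Longrightarrow> {v, p v} \<in> parent_edges V r p"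
  unfolding parent_edges_def by blast

lemma parent_edge_cases:
  assumes "{x, y} \<in> parent_edges V r p"
  shows "(x \<in> V \<and> x \<noteq> r \<and> y = p x) \<or> (y \<in> V \<and> y \<noteq> r \<and> x = p y)"
proof -
  obtain v where "{x, y} = {v, p v}" "v \<in> V" "v \<noteq> r"
    using assms by (auto simp: parent_edges_def)
  then show ?thesis
    unfolding doubleton_eq_iff by auto
qed

lemma parent_edges_card:
  assumes "e \<in> parent_edges V r p"
  shows "e \<subseteq> V \<and> card e = 2"
proof -
  obtain v where v: "e = {v, p v}" "v \<in> V" "v \<noteq> r"
    using assms by (auto simp: parent_edges_def)
  then have "p v \<noteq> v"
    using funpow_eq_self_imp_root[of v 1] by auto
  then show ?thesis
    using v parent_in by auto
qed

lemma walk_adj_path_to_root: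
  assumes "v \<in> V"
  shows "walk_adj (parent_edges V r p) (path_to_root r p v)"
  unfolding walk_adj_def
proof (intro allI impI)
  fix i assume "Suc i < length (path_to_root r p v)"
  then have i: "i < depth v"
    by (simp add: length_path_to_root)
  then have "depth ((p ^^ i) v) \<noteq> 0"
    using depth_funpow[OF assms, of i] by simp
  then have "(p ^^ i) v \<noteq> r"
    using depth_eq_0_iff[OF funpow_in[OF assms]] by simp
  then show "{path_to_root r p v ! i, path_to_root r p v ! Suc i} \<in> parent_edges V r p"
    using i parent_edge[OF funpow_in[OF assms]] by (simp add: nth_path_to_root)
qed

lemma is_path_rev_path_to_root: "v \<in> V \<Longrightarrow> is_path (parent_edges V r p) (rev (path_to_root r p v))"
  using walk_adj_path_to_root distinct_path_to_root path_to_root_ne by (simp add: is_path_def)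

lemma parent_edges_connected:
  assumes "u \<in> V" "v \<in> V"
  shows "\<exists>q. is_path (parent_edges V r p) q \<and> hd q = u \<and> last q = v"
proof -
  obtain xs where xs: "path_to_root r p u = xs @ [r]"
    using last_path_to_root[OF assms(1)] path_to_root_ne by (metis append_butlast_last_id)
  obtain ys where ys: "rev (path_to_root r p v) = r # ys"
    using last_path_to_root[OF assms(2)] path_to_root_ne
    by (metis append_butlast_last_id rev.simps(2) rev_rev_ident)
  have "walk_adj (parent_edges V r p) (xs @ r # ys)"
    using walk_adj_path_to_root[OF assms(1)] walk_adj_path_to_root[OF assms(2)] xs ys
      walk_adj_rev[of _ "path_to_root r p v"] walk_adj_append_Cons[of _ xs r ys]
    by simp
  moreover have "hd (xs @ r # ys) = u"
    using xs hd_path_to_root[of u] by (cases xs) auto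
  moreover have "last (xs @ r # ys) = v"
    using ys hd_path_to_root[of v] path_to_root_ne[of v] by (metis last_appendR last_rev list.distinct(1))
  ultimately show ?thesis
    using walk_adj_imp_path by fastforce
qed

text \<open>On a cycle, a vertex of maximal depth would have its parent as both of its neighbours.\<close>

lemma parent_edges_acyclic: "\<not> is_cycle (parent_edges V r p) c"
proof
  assume "is_cycle (parent_edges V r p) c"
  then have len: "length c \<ge> 3" and dc: "distinct c" and walk: "walk_adj (parent_edges V r p) c"
    and closing: "{last c, hd c} \<in> parent_edges V r p"
    by (auto simp: is_cycle_def)
  define l where "l = length c"
  define nxt where "nxt k = (if Suc k < l then Suc k else 0)" for k
  have "0 < l"
    using len unfolding l_def by linarith
  then have nxt_lt: "nxt k < l" for k
    by (simp add: nxt_def)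
  have adj: "{c ! k, c ! nxt k} \<in> parent_edges V r p" if "k < l" for k
  proof (cases "Suc k < l")
    case True
    then show ?thesis using walk by (simp add: walk_adj_def l_def nxt_def)
  next
    case False
    then have "k = l - 1" "nxt k = 0" using that by (auto simp: nxt_def)
    moreover have "c \<noteq> []"
      using len by auto
    ultimately show ?thesis
      using closing by (simp add: last_conv_nth hd_conv_nth l_def)
  qed
  obtain i where i: "i < l" and max: "\<And>j. j < l \<Longrightarrow> depth (c ! j) \<le> depth (c ! i)"
  proof -
    let ?D = "(\<lambda>j. depth (c ! j)) ` {..<l}"
    have "finite ?D" "?D \<noteq> {}"
      using \<open>0 < l\<close> by auto
    then have "Max ?D \<in> ?D"
      by (rule Max_in)
    then obtain i where i: "i < l" "Max ?D = depth (c ! i)"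
      by blast
    have "depth (c ! j) \<le> depth (c ! i)" if "j < l" for j
      using Max_ge[OF \<open>finite ?D\<close>] that unfolding i(2)[symmetric] by simp
    with i(1) show ?thesis
      by (rule that)
  qed
  have to_parent: "c ! j = p (c ! i)" if "{c ! i, c ! j} \<in> parent_edges V r p" "j < l" for j
  proof (rule ccontr)
    assume "c ! j \<noteq> p (c ! i)"
    then have "c ! j \<in> V" "c ! j \<noteq> r" "c ! i = p (c ! j)"
      using parent_edge_cases[OF that(1)] by auto
    then have "depth (c ! i) < depth (c ! j)"
      using depth_parent by simp
    then show False
      using max[OF that(2)] by simp
  qed
  define prev where "prev = (if i = 0 then l - 1 else i - 1)"
  have prev: "prev < l" "nxt prev = i" "prev \<noteq> nxt i"
    using i len by (auto simp: prev_def nxt_def l_def)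
  have "{c ! i, c ! prev} \<in> parent_edges V r p"
    using adj[OF prev(1)] prev(2) by (simp add: insert_commute)
  then have "c ! prev = c ! nxt i"
    using to_parent[OF _ prev(1)] to_parent[OF adj[OF i] nxt_lt] by simp
  then show False
    using nth_eq_iff_index_eq[OF dc] prev nxt_lt[of i] by (simp add: l_def)
qed

lemma is_tree_parent_edges: "is_tree V (parent_edges V r p)"
  unfolding is_tree_def using parent_edges_card parent_edges_connected parent_edges_acyclic by blast

lemma set_path_from_root:
  "is_path (parent_edges V r p) w \<Longrightarrow> hd w = r \<Longrightarrow> set w = forward_orbit p (last w) \<and> last w \<in> V"
proof (induction w rule: rev_induct)
  case Nil
  then show ?case by (simp add: is_path_def)
next
  case (snoc v w)
  show ?case
  proof (cases "w = []")
    case True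
    then show ?thesis
      using snoc.prems forward_orbit_root root_in by simp
  next
    case False
    then obtain xs u where w: "w = xs @ [u]"
      by (metis append_butlast_last_id)
    have "walk_adj (parent_edges V r p) (xs @ u # [v])" and distinct: "distinct (w @ [v])"
      using snoc.prems w by (auto simp: is_path_def)
    then have "walk_adj (parent_edges V r p) w" and edge: "{u, v} \<in> parent_edges V r p"
      using w walk_adj_append_Cons[of _ xs u "[v]"] by auto
    moreover have "hd w = r"
      using snoc.prems(2) False by simp
    ultimately have IH: "set w = forward_orbit p u" "u \<in> V"
      using snoc.IH distinct False w by (auto simp: is_path_def)
    from parent_edge_cases[OF edge] show ?thesis
    proof
      assume "u \<in> V \<and> u \<noteq> r \<and> v = p u"
      then have "v \<in> set w"
        using IH forward_orbit_step[of p u] self_in_forward_orbit[of "p u" p] by simp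
      then show ?thesis
        using distinct by simp
    next
      assume "v \<in> V \<and> v \<noteq> r \<and> u = p v"
      then show ?thesis
        using IH forward_orbit_step[of p v] by auto
    qed
  qed
qed

lemma ancestors_parent_edges:
  assumes "v \<in> V"
  shows "ancestors (parent_edges V r p) r v = forward_orbit p v"
proof
  show "ancestors (parent_edges V r p) r v \<subseteq> forward_orbit p v"
    unfolding ancestors_def using set_path_from_root by blast
  have "hd (rev (path_to_root r p v)) = r" "last (rev (path_to_root r p v)) = v"
    using last_path_to_root[OF assms] hd_path_to_root[of v] path_to_root_ne[of v]
    by (simp_all add: hd_rev last_rev)
  then show "forward_orbit p v \<subseteq> ancestors (parent_edges V r p) r v"
    unfolding ancestors_def using is_path_rev_path_to_root[OF assms] set_path_to_root[OF assms]
    by fastforce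
qed

lemma card_forward_orbit: "v \<in> V \<Longrightarrow> card (forward_orbit p v) = Suc (depth v)"
  using set_path_to_root distinct_card[OF distinct_path_to_root] length_path_to_root by metis

lemma forward_orbit_inj:
  assumes "u \<in> V" "v \<in> V" "forward_orbit p u = forward_orbit p v"
  shows "u = v"
proof -
  have "Suc (depth u) = Suc (depth v)"
    using card_forward_orbit[OF assms(1)] card_forward_orbit[OF assms(2)] assms(3) by simp
  then have same_depth: "depth u = depth v"
    by simp
  have "u \<in> forward_orbit p v"
    using assms(3) self_in_forward_orbit[of u p] by simp
  then obtain k where k: "u = (p ^^ k) v"
    unfolding forward_orbit_def by auto
  show ?thesis
  proof (cases "v = r")
    case True
    then show ?thesis using k funpow_root by simp
  next
    case False
    then have pos: "0 < depth v"
      using depth_eq_0_iff[OF assms(2)] by simp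
    have k_le: "k \<le> depth v"
    proof (rule ccontr)
      assume "\<not> k \<le> depth v"
      then have "u = r"
        using funpow_beyond_depth[OF assms(2)] k by simp
      then have "depth u = 0"
        using depth_eq_0_iff[OF root_in] by simp
      then show False
        using same_depth pos by simp
    qed
    have "depth u = depth v - k"
      unfolding k by (rule depth_funpow[OF assms(2) k_le])
    then have "k = 0"
      using same_depth pos k_le by linarith
    then show ?thesis
      using k by simp
  qed
qed

lemma forward_orbit_parent:
  assumes "v \<in> V" "v \<noteq> r"
  shows "forward_orbit p (p v) = forward_orbit p v - {v}"
proof -
  have "v \<notin> forward_orbit p (p v)"
  proof
    assume "v \<in> forward_orbit p (p v)"
    then obtain k where "(p ^^ k) (p v) = v"
      unfolding mem_forward_orbit_iff by blast
    then have "(p ^^ Suc k) v = v"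
      by (simp add: funpow_apply_Suc_right del: funpow.simps)
    from funpow_eq_self_imp_root[OF assms(1) this] show False
      using assms(2) by simp
  qed
  then show ?thesis
    using forward_orbit_step[of p v] by auto
qed

end

lemma parent_edges_determine_parent:
  assumes "parent_fun V r p" "parent_fun V r q" "parent_edges V r p = parent_edges V r q" "v \<in> V"
  shows "p v = q v"
proof -
  interpret P: parent_fun V r p by fact
  interpret Q: parent_fun V r q by fact
  have same_orbits: "forward_orbit p x = forward_orbit q x" if "x \<in> V" for x
    using P.ancestors_parent_edges[OF that] Q.ancestors_parent_edges[OF that] assms(3) by simp
  show ?thesis
  proof (cases "v = r")
    case True
    then show ?thesis using P.parent_root Q.parent_root by simp
  next
    case False
    have "forward_orbit p (q v) = forward_orbit q (q v)"
      using same_orbits Q.parent_in[OF assms(4)] by simp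
    also have "\<dots> = forward_orbit p (p v)"
      using P.forward_orbit_parent Q.forward_orbit_parent same_orbits assms(4) False by simp
    finally show ?thesis
      using P.forward_orbit_inj P.parent_in Q.parent_in assms(4) by blast
  qed
qed

lemma tree_subset_eq:
  assumes F: "is_tree V F" and E: "is_tree V E" and "F \<subseteq> E"
  shows "F = E"
proof (rule ccontr)
  assume "F \<noteq> E"
  then obtain e where "e \<in> E" "e \<notin> F"
    using \<open>F \<subseteq> E\<close> by blast
  then have "e \<subseteq> V" "card e = 2"
    using E unfolding is_tree_def by blast+
  then obtain x y where e: "e = {x, y}" "x \<noteq> y" "x \<in> V" "y \<in> V"
    by (auto simp: card_2_iff)
  obtain q where q: "is_path F q" "hd q = x" "last q = y"
    using F e(3,4) unfolding is_tree_def by blast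
  have "length q \<noteq> 1"
    using q e(2) by (auto simp: is_path_def length_Suc_conv)
  moreover have "length q \<noteq> 2"
  proof
    assume "length q = 2"
    then have "q = [x, y]"
      using q by (auto simp: numeral_2_eq_2 length_Suc_conv)
    then show False
      using q(1) e(1) \<open>e \<notin> F\<close> by (simp add: is_path_def)
  qed
  moreover have "length q \<noteq> 0"
    using q(1) by (simp add: is_path_def)
  ultimately have "length q \<ge> 3"
    by linarith
  then have "is_cycle E q"
    using q walk_adj_mono[OF _ \<open>F \<subseteq> E\<close>] \<open>e \<in> E\<close> e(1)
    by (auto simp: is_cycle_def is_path_def insert_commute)
  then show False
    using E by (simp add: is_tree_def)
qed

definition path_dist :: "nat set set \<Rightarrow> nat \<Rightarrow> nat \<Rightarrow> nat" where
  "path_dist E r v = (LEAST k. \<exists>w. is_path E w \<and> hd w = r \<and> last w = v \<and> length w = Suc k)"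

lemma shorter_neighbour:
  assumes E: "is_tree V E" and "r \<in> V" "v \<in> V" "v \<noteq> r"
  shows "\<exists>u \<in> V. {u, v} \<in> E \<and> path_dist E r u < path_dist E r v"
proof -
  have dist_le: "path_dist E r x \<le> k"
    if "is_path E w" "hd w = r" "last w = x" "length w = Suc k" for x w k
    unfolding path_dist_def using that by (intro Least_le) blast
  obtain w0 where "is_path E w0" "hd w0 = r" "last w0 = v"
    using E assms(2,3) unfolding is_tree_def by blast
  then have "\<exists>k w. is_path E w \<and> hd w = r \<and> last w = v \<and> length w = Suc k"
    by (intro exI[of _ "length w0 - 1"] exI[of _ w0]) (auto simp: is_path_def)
  from LeastI_ex[OF this] obtain w
    where w: "is_path E w" "hd w = r" "last w = v" "length w = Suc (path_dist E r v)"
    unfolding path_dist_def by blast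
  define ws where "ws = butlast w"
  have "w \<noteq> []"
    using w(1) by (simp add: is_path_def)
  then have ws: "w = ws @ [v]"
    using append_butlast_last_id[of w] w(3) by (simp add: ws_def)
  then have "ws \<noteq> []"
    using w(2) assms(4) by auto
  then obtain xs u where xs: "ws = xs @ [u]"
    by (metis append_butlast_last_id)
  have "walk_adj E (xs @ u # [v])"
    using w(1) ws xs by (simp add: is_path_def)
  then have "walk_adj E ws" and edge: "{u, v} \<in> E"
    using walk_adj_append_Cons[of E xs u "[v]"] xs by auto
  then have "is_path E ws"
    using w(1) ws \<open>ws \<noteq> []\<close> by (simp add: is_path_def)
  moreover have "hd ws = r"
    using w(2) ws \<open>ws \<noteq> []\<close> by simp
  moreover have "last ws = u"
    using xs by simp
  moreover have "path_dist E r v = length ws"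
    using w(4) ws by simp
  then have "path_dist E r v \<noteq> 0" "length ws = Suc (path_dist E r v - 1)"
    using \<open>ws \<noteq> []\<close> by simp_all
  ultimately have "path_dist E r u < path_dist E r v"
    using dist_le by fastforce
  moreover have "u \<in> V"
    using E edge unfolding is_tree_def by blast
  ultimately show ?thesis
    using edge by (intro bexI[of _ u]) auto
qed

text \<open>Send each vertex to a neighbour closer to the root.\<close>

lemma tree_parent_fun:
  assumes E: "is_tree V E" and r: "r \<in> V"
  shows "\<exists>p. p \<in> V \<rightarrow>\<^sub>E V \<and> parent_fun V r p \<and> parent_edges V r p = E"
proof -
  define p where "p = (\<lambda>v \<in> V. if v = r then r
    else SOME u. u \<in> V \<and> {u, v} \<in> E \<and> path_dist E r u < path_dist E r v)"
  have p: "p v \<in> V \<and> {p v, v} \<in> E \<and> path_dist E r (p v) < path_dist E r v"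
    if "v \<in> V" "v \<noteq> r" for v
  proof -
    have "\<exists>u. u \<in> V \<and> {u, v} \<in> E \<and> path_dist E r u < path_dist E r v"
      using shorter_neighbour[OF E r that] by blast
    from someI_ex[OF this] show ?thesis
      using that by (simp add: p_def)
  qed
  have p_root: "p r = r"
    using r by (simp add: p_def)
  have p_in: "p v \<in> V" if "v \<in> V" for v
    using p[OF that] p_root r by (cases "v = r") auto
  have reaches: "\<exists>k. (p ^^ k) v = r" if "v \<in> V" for v
    using that
  proof (induction v rule: measure_induct_rule[of "path_dist E r"])
    case (less v)
    show ?case
    proof (cases "v = r")
      case True
      then show ?thesis by (intro exI[of _ 0]) simp
    next
      case False
      then obtain k where "(p ^^ k) (p v) = r"
        using less p by blast
      then show ?thesis
        by (metis funpow_apply_Suc_right)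
    qed
  qed
  interpret parent_fun V r p
    using r p_in p_root reaches by unfold_locales
  have "parent_edges V r p \<subseteq> E"
    using p by (auto simp: parent_edges_def insert_commute)
  then have "parent_edges V r p = E"
    using tree_subset_eq[OF is_tree_parent_edges E] by blast
  moreover have "p \<in> V \<rightarrow>\<^sub>E V"
    using p_in by (simp add: p_def)
  ultimately show ?thesis
    using parent_fun_axioms by blast
qed

definition triply_rooted_parent_funs :: "nat \<Rightarrow> ((nat \<Rightarrow> nat) \<times> nat \<times> nat \<times> nat) set" where
  "triply_rooted_parent_funs n = {(p, r1, r2, r3).
     p \<in> {1..n} \<rightarrow>\<^sub>E {1..n} \<and> parent_fun {1..n} r1 p \<and> r2 \<in> {1..n} \<and> r3 \<in> {1..n}}"

definition to_tree ::
    "nat \<Rightarrow> (nat \<Rightarrow> nat) \<times> nat \<times> nat \<times> nat \<Rightarrow> nat set set \<times> nat \<times> nat \<times> nat" where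
  "to_tree n = (\<lambda>(p, r1, r2, r3). (parent_edges {1..n} r1 p, r1, r2, r3))"

lemma bij_betw_to_tree:
  "bij_betw (to_tree n) (triply_rooted_parent_funs n) (triply_rooted_trees n)"
proof (rule bij_betw_imageI)
  show "inj_on (to_tree n) (triply_rooted_parent_funs n)"
  proof (rule inj_onI)
    fix P Q
    assume "P \<in> triply_rooted_parent_funs n" "Q \<in> triply_rooted_parent_funs n"
      "to_tree n P = to_tree n Q"
    moreover obtain p r1 r2 r3 q s1 s2 s3 where PQ: "P = (p, r1, r2, r3)" "Q = (q, s1, s2, s3)"
      by (cases P, cases Q)
    ultimately have p: "p \<in> {1..n} \<rightarrow>\<^sub>E {1..n}" "parent_fun {1..n} r1 p"
      and q: "q \<in> {1..n} \<rightarrow>\<^sub>E {1..n}" "parent_fun {1..n} r1 q"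
      and same: "parent_edges {1..n} r1 p = parent_edges {1..n} r1 q" "r1 = s1" "r2 = s2" "r3 = s3"
      by (auto simp: triply_rooted_parent_funs_def to_tree_def)
    have "p = q"
      using p(1) q(1) parent_edges_determine_parent[OF p(2) q(2) same(1)] by (rule PiE_ext)
    then show "P = Q"
      using PQ same by simp
  qed
  show "to_tree n ` triply_rooted_parent_funs n = triply_rooted_trees n"
  proof
    show "to_tree n ` triply_rooted_parent_funs n \<subseteq> triply_rooted_trees n"
    proof (rule image_subsetI)
      fix P assume P: "P \<in> triply_rooted_parent_funs n"
      obtain p r1 r2 r3 where PP: "P = (p, r1, r2, r3)"
        by (cases P)
      with P have pf: "parent_fun {1..n} r1 p" "r2 \<in> {1..n}" "r3 \<in> {1..n}"
        by (simp_all add: triply_rooted_parent_funs_def)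
      then show "to_tree n P \<in> triply_rooted_trees n"
        using PP parent_fun.is_tree_parent_edges[OF pf(1)] parent_fun.root_in[OF pf(1)]
        by (simp add: to_tree_def triply_rooted_trees_def)
    qed
    show "triply_rooted_trees n \<subseteq> to_tree n ` triply_rooted_parent_funs n"
    proof clarify
      fix E r1 r2 r3
      assume "(E, r1, r2, r3) \<in> triply_rooted_trees n"
      then have "is_tree {1..n} E" "r1 \<in> {1..n}" "r2 \<in> {1..n}" "r3 \<in> {1..n}"
        by (auto simp: triply_rooted_trees_def)
      moreover obtain p where "p \<in> {1..n} \<rightarrow>\<^sub>E {1..n}" "parent_fun {1..n} r1 p"
        "parent_edges {1..n} r1 p = E"
        using tree_parent_fun calculation(1,2) by blast
      ultimately have "(p, r1, r2, r3) \<in> triply_rooted_parent_funs n"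
        "to_tree n (p, r1, r2, r3) = (E, r1, r2, r3)"
        by (simp_all add: triply_rooted_parent_funs_def to_tree_def)
      then show "(E, r1, r2, r3) \<in> to_tree n ` triply_rooted_parent_funs n"
        by (metis image_eqI)
    qed
  qed
qed

section \<open>Periodic points\<close>

definition periodic :: "('a \<Rightarrow> 'a) \<Rightarrow> 'a \<Rightarrow> bool" where
  "periodic g x \<longleftrightarrow> (\<exists>j\<ge>1. (g ^^ j) x = x)"

definition period :: "('a \<Rightarrow> 'a) \<Rightarrow> 'a \<Rightarrow> nat" where
  "period g x = (LEAST k. k \<ge> 1 \<and> (g ^^ k) x = x)"

lemma periodic_apply: "periodic g x \<Longrightarrow> periodic g (g x)"
  unfolding periodic_def by (metis funpow_swap1)

lemma periodic_funpow: "periodic g x \<Longrightarrow> periodic g ((g ^^ k) x)"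
  by (induction k) (auto simp: periodic_apply)

lemma period:
  assumes "periodic g x"
  shows "period g x \<ge> 1" "(g ^^ period g x) x = x"
  using LeastI_ex[OF assms[unfolded periodic_def]] by (simp_all add: period_def)

lemma funpow_less_period: "1 \<le> k \<Longrightarrow> k < period g x \<Longrightarrow> (g ^^ k) x \<noteq> x"
  unfolding period_def using not_less_Least by blast

lemma funpow_mult_period: "periodic g x \<Longrightarrow> (g ^^ (period g x * q)) x = x"
proof (induction q)
  case (Suc q)
  then show ?case
    using period(2)[OF Suc.prems] by (simp add: funpow_apply_add[symmetric])
qed simp

lemma funpow_mod_period:
  assumes "periodic g x"
  shows "(g ^^ k) x = (g ^^ (k mod period g x)) x"
proof -
  have "(g ^^ k) x = (g ^^ (k mod period g x)) ((g ^^ (period g x * (k div period g x))) x)"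
    by (simp add: funpow_apply_add)
  then show ?thesis
    using funpow_mult_period[OF assms] by simp
qed

lemma funpow_inj_below_period:
  assumes "periodic g x" "i < period g x" "j < period g x" "(g ^^ i) x = (g ^^ j) x"
  shows "i = j"
proof (rule ccontr)
  assume "i \<noteq> j"
  then obtain a b where ab: "a < b" "b < period g x" "(g ^^ a) x = (g ^^ b) x"
    using assms by (metis linorder_neqE_nat)
  have "(g ^^ (period g x - b + a)) x = (g ^^ (period g x - b)) ((g ^^ a) x)"
    by (simp add: funpow_apply_add)
  also have "\<dots> = (g ^^ (period g x - b)) ((g ^^ b) x)"
    using ab(3) by simp
  also have "\<dots> = x"
    using ab(2) period(2)[OF assms(1)] by (simp add: funpow_apply_add)
  finally have "(g ^^ (period g x - b + a)) x = x" .
  moreover have "1 \<le> period g x - b + a" "period g x - b + a < period g x"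
    using ab by linarith+
  ultimately show False
    using funpow_less_period[of "period g x - b + a" g x] by simp
qed

text \<open>A common multiple of the two periods shows that \<open>g\<close> is injective on its periodic points.\<close>

lemma periodic_inj:
  assumes "periodic g x" "periodic g y" "g x = g y"
  shows "x = y"
proof -
  define K where "K = period g x * period g y"
  have "K \<ge> 1"
    using period(1)[OF assms(1)] period(1)[OF assms(2)] by (simp add: K_def)
  have "(g ^^ K) x = x"
    using funpow_mult_period[OF assms(1), of "period g y"] by (simp add: K_def)
  moreover have "(g ^^ K) y = y"
    using funpow_mult_period[OF assms(2), of "period g x"] by (simp add: K_def mult.commute)
  moreover have "(g ^^ K) z = (g ^^ (K - 1)) (g z)" for z
    using \<open>K \<ge> 1\<close> funpow_apply_Suc_right[of "K - 1" g z] by simp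
  ultimately have "x = (g ^^ (K - 1)) (g x)" "y = (g ^^ (K - 1)) (g y)"
    by simp_all
  then show ?thesis
    using assms(3) by simp
qed

lemma eventually_periodic:
  assumes "finite A" "\<And>y. y \<in> A \<Longrightarrow> g y \<in> A" "x \<in> A"
  shows "\<exists>k. periodic g ((g ^^ k) x)"
proof -
  have in_A: "(g ^^ i) x \<in> A" for i
    by (induction i) (simp_all add: assms)
  have "\<not> inj_on (\<lambda>i. (g ^^ i) x) {..card A}"
  proof
    assume "inj_on (\<lambda>i. (g ^^ i) x) {..card A}"
    then have "card {..card A} \<le> card A"
      using card_inj_on_le[OF _ _ assms(1)] in_A by blast
    then show False by simp
  qed
  then obtain i j where "i < j" "(g ^^ i) x = (g ^^ j) x"
    unfolding inj_on_def by (metis linorder_neqE_nat)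
  moreover have "(g ^^ (j - i)) ((g ^^ i) x) = (g ^^ j) x"
    using \<open>i < j\<close> by (simp add: funpow_apply_add)
  ultimately have "(g ^^ (j - i)) ((g ^^ i) x) = (g ^^ i) x"
    by simp
  then have "periodic g ((g ^^ i) x)"
    unfolding periodic_def using \<open>i < j\<close> by (intro exI[of _ "j - i"]) simp
  then show ?thesis ..
qed

section \<open>From a function to a triply rooted parent function\<close>

locale fun_encoding =
  fixes n :: nat and f :: "nat \<Rightarrow> nat"
  assumes f_funs: "f \<in> funs n"
begin

lemma f_in: "x \<in> {1..Suc n} \<Longrightarrow> f x \<in> {1..n}"
  using f_funs by (auto simp: funs_def)

lemma f_undefined: "x \<notin> {1..Suc n} \<Longrightarrow> f x = undefined"
  using f_funs by (auto simp: funs_def PiE_def extensional_def)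

lemma funpow_in: "x \<in> {1..n} \<Longrightarrow> (f ^^ k) x \<in> {1..n}"
  by (induction k) (use f_in in auto)

lemma periodic_points_iff: "x \<in> periodic_points n f \<longleftrightarrow> x \<in> {1..n} \<and> periodic f x"
proof -
  have "\<not> periodic f (Suc n)"
  proof
    assume "periodic f (Suc n)"
    then obtain j where "j \<ge> 1" "(f ^^ j) (Suc n) = Suc n"
      unfolding periodic_def by auto
    moreover have "(f ^^ (j - 1)) (f (Suc n)) \<in> {1..n}"
      using funpow_in f_in by simp
    ultimately show False
      using funpow_apply_Suc_right[of "j - 1" f "Suc n"] by simp
  qed
  then show ?thesis
    unfolding periodic_points_def periodic_def by (auto simp: atLeastAtMostSuc_conv)
qed

lemma eventually_periodic_in: "x \<in> {1..n} \<Longrightarrow> \<exists>k. periodic f ((f ^^ k) x)"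
  using eventually_periodic[of "{1..n}"] f_in by simp

definition start :: nat where
  "start = f (Suc n)"

definition tail_len :: nat where
  "tail_len = (LEAST k. periodic f ((f ^^ k) start))"

definition entry :: nat where
  "entry = (f ^^ tail_len) start"

definition cycle_len :: nat where
  "cycle_len = period f entry"

definition cycle_last :: nat where
  "cycle_last = (f ^^ (cycle_len - 1)) entry"

definition tail :: "nat list" where
  "tail = map (\<lambda>i. (f ^^ i) start) [0..<tail_len]"

definition cycle :: "nat list" where
  "cycle = map (\<lambda>i. (f ^^ i) entry) [0..<cycle_len]"

definition others :: "nat set" where
  "others = periodic_points n f - set cycle"

definition others_path :: "nat list" where
  "others_path = map f (sorted_list_of_set others)"

definition third_root :: nat where
  "third_root = hd (others_path @ cycle)"

definition parent :: "nat \<Rightarrow> nat" where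
  "parent x = (if x \<in> {1..n} then
     (if x = cycle_last then cycle_last else if x \<in> others then successor others_path entry x else f x)
     else undefined)"

lemma start_in: "start \<in> {1..n}"
  using f_in by (simp add: start_def)

lemma entry_periodic: "periodic f entry"
  unfolding entry_def tail_len_def using eventually_periodic_in[OF start_in] by (rule LeastI_ex)

lemma not_periodic_before_entry: "k < tail_len \<Longrightarrow> \<not> periodic f ((f ^^ k) start)"
  unfolding tail_len_def by (rule not_less_Least)

lemma entry_in: "entry \<in> {1..n}"
  unfolding entry_def using funpow_in[OF start_in] .

lemma cycle_len_pos: "cycle_len \<ge> 1"
  and funpow_cycle_len: "(f ^^ cycle_len) entry = entry"
  using period[OF entry_periodic] by (simp_all add: cycle_len_def)

lemma length_tail: "length tail = tail_len"
  and length_cycle: "length cycle = cycle_len"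
  and nth_tail: "i < tail_len \<Longrightarrow> tail ! i = (f ^^ i) start"
  and nth_cycle: "i < cycle_len \<Longrightarrow> cycle ! i = (f ^^ i) entry"
  by (simp_all add: tail_def cycle_def)

lemma cycle_ne: "cycle \<noteq> []"
  using cycle_len_pos by (simp add: cycle_def)

lemma hd_cycle: "hd cycle = entry"
  using cycle_len_pos by (simp add: cycle_def hd_map)

lemma last_cycle: "last cycle = cycle_last"
  using cycle_len_pos by (simp add: cycle_last_def cycle_def last_map)

lemma f_cycle_last: "f cycle_last = entry"
proof -
  have "f cycle_last = (f ^^ Suc (cycle_len - 1)) entry"
    by (simp add: cycle_last_def)
  then show ?thesis
    using cycle_len_pos funpow_cycle_len by simp
qed

lemma distinct_cycle: "distinct cycle"
  unfolding distinct_conv_nth length_cycle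
  using funpow_inj_below_period[OF entry_periodic] by (simp add: nth_cycle cycle_len_def) blast

lemma distinct_tail: "distinct tail"
  unfolding distinct_conv_nth length_tail
proof (intro allI impI notI)
  have no_repeat: False if "i < j" "j < tail_len" "(f ^^ i) start = (f ^^ j) start" for i j
  proof -
    have "(f ^^ (j - i)) ((f ^^ i) start) = (f ^^ j) start"
      using that(1) by (simp add: funpow_apply_add)
    then have "(f ^^ (j - i)) ((f ^^ i) start) = (f ^^ i) start"
      using that(3) by simp
    then have "periodic f ((f ^^ i) start)"
      unfolding periodic_def using that(1) by (intro exI[of _ "j - i"]) simp
    then show False
      using not_periodic_before_entry that by simp
  qed
  fix i j assume "i < tail_len" "j < tail_len" "i \<noteq> j" "tail ! i = tail ! j"
  then have "(f ^^ i) start = (f ^^ j) start"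
    by (simp add: nth_tail)
  with \<open>i < tail_len\<close> \<open>j < tail_len\<close> \<open>i \<noteq> j\<close> show False
    using no_repeat by (metis linorder_neqE_nat)
qed

lemma tail_not_periodic: "x \<in> set tail \<Longrightarrow> \<not> periodic f x"
  using not_periodic_before_entry by (auto simp: tail_def)

lemma tail_in: "set tail \<subseteq> {1..n}"
  using funpow_in[OF start_in] by (auto simp: tail_def)

lemma cycle_periodic_points: "set cycle \<subseteq> periodic_points n f"
  using periodic_funpow[OF entry_periodic] funpow_in[OF entry_in]
  by (auto simp: cycle_def periodic_points_iff)

lemma cycle_in: "set cycle \<subseteq> {1..n}"
  using cycle_periodic_points by (auto simp: periodic_points_iff)

lemma cycle_last_in_cycle: "cycle_last \<in> set cycle"
  using last_cycle cycle_ne by (metis last_in_set)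

lemma cycle_last_in: "cycle_last \<in> {1..n}"
  using cycle_last_in_cycle cycle_in by blast

lemma distinct_tail_cycle: "distinct (tail @ cycle)"
  using distinct_tail distinct_cycle tail_not_periodic cycle_periodic_points
  by (auto simp: periodic_points_iff)

lemma follows_tail_cycle: "follows f (tail @ cycle)"
proof -
  have "follows f tail" "follows f cycle"
    by (simp_all add: follows_def length_tail length_cycle nth_tail nth_cycle)
  moreover have "f (last tail) = hd cycle" if "tail \<noteq> []"
  proof -
    have "0 < tail_len"
      using that length_tail by (metis length_greater_0_conv)
    then have "last tail = (f ^^ (tail_len - 1)) start"
      using that by (simp add: last_conv_nth length_tail nth_tail)
    then have "f (last tail) = (f ^^ Suc (tail_len - 1)) start"
      by simp
    also have "\<dots> = hd cycle"
      using \<open>0 < tail_len\<close> by (simp add: hd_cycle entry_def)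
    finally show ?thesis .
  qed
  ultimately show ?thesis
    using follows_append by blast
qed

lemma hd_tail_cycle: "hd (tail @ cycle) = start"
  using hd_cycle by (cases "tail_len = 0") (auto simp: entry_def tail_def hd_map)

lemma cycle_preimage:
  assumes "y \<in> set cycle"
  shows "\<exists>x \<in> set cycle. f x = y"
proof -
  obtain i where i: "i < cycle_len" "y = (f ^^ i) entry"
    using assms by (auto simp: cycle_def)
  define j where "j = (i + cycle_len - 1) mod cycle_len"
  have "j < cycle_len"
    using cycle_len_pos by (simp add: j_def)
  have "Suc j mod cycle_len = i"
    using i(1) cycle_len_pos unfolding j_def by (simp add: mod_Suc_eq)
  then have "f ((f ^^ j) entry) = y"
    using funpow_mod_period[OF entry_periodic, of "Suc j"] i(2) by (simp add: cycle_len_def)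
  then show ?thesis
    using \<open>j < cycle_len\<close> by (auto simp: cycle_def)
qed

lemma finite_others: "finite others"
  by (simp add: others_def periodic_points_def)

lemma others_periodic_points: "others \<subseteq> periodic_points n f"
  by (auto simp: others_def)

lemma others_periodic: "x \<in> others \<Longrightarrow> x \<in> {1..n} \<and> periodic f x"
  using others_periodic_points periodic_points_iff by blast

lemma inj_on_others: "inj_on f others"
proof (rule inj_onI)
  fix x y assume "x \<in> others" "y \<in> others" "f x = f y"
  then show "x = y"
    using periodic_inj[of f x y] others_periodic[of x] others_periodic[of y] by simp
qed

text \<open>Since \<open>f\<close> is injective on periodic points and maps the cycle onto itself, it permutes the rest.\<close>

lemma image_others: "f ` others = others"
proof (rule endo_inj_surj[OF finite_others _ inj_on_others])
  show "f ` others \<subseteq> others"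
  proof clarify
    fix x assume x: "x \<in> others"
    then have "f x \<in> periodic_points n f"
      using others_periodic[OF x] periodic_apply f_in by (auto simp: periodic_points_iff)
    moreover have "f x \<notin> set cycle"
    proof
      assume "f x \<in> set cycle"
      then obtain z where "z \<in> set cycle" "f z = f x"
        using cycle_preimage by blast
      moreover have "periodic f z"
        using \<open>z \<in> set cycle\<close> cycle_periodic_points by (auto simp: periodic_points_iff)
      ultimately have "z = x"
        using periodic_inj[of f z x] others_periodic[OF x] by simp
      then show False
        using x \<open>z \<in> set cycle\<close> by (simp add: others_def)
    qed
    ultimately show "f x \<in> others"
      by (simp add: others_def)
  qed
qed

lemma set_others_path: "set others_path = others"
  using image_others finite_others by (simp add: others_path_def)

lemma distinct_others_path: "distinct others_path"
  using inj_on_others finite_others by (simp add: others_path_def distinct_map)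

lemma periodic_points_eq: "periodic_points n f = set (others_path @ cycle)"
  using set_others_path cycle_periodic_points by (auto simp: others_def)

lemma distinct_others_path_cycle: "distinct (others_path @ cycle)"
  using distinct_others_path distinct_cycle set_others_path by (auto simp: others_def)

lemma third_root_in: "third_root \<in> {1..n}"
proof -
  have "third_root \<in> set (others_path @ cycle)"
    using cycle_ne unfolding third_root_def by (intro hd_in_set) simp
  then show ?thesis
    using periodic_points_eq by (auto simp: periodic_points_iff)
qed

lemma parent_in: "x \<in> {1..n} \<Longrightarrow> parent x \<in> {1..n}"
  using successor_in[OF distinct_others_path, of x entry] set_others_path others_periodic entry_in
    cycle_last_in f_in
  by (auto simp: parent_def)

lemma parent_PiE: "parent \<in> {1..n} \<rightarrow>\<^sub>E {1..n}"
proof (rule PiE_I)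
  show "parent x \<in> {1..n}" if "x \<in> {1..n}" for x
    using parent_in that .
  show "parent x = undefined" if "x \<notin> {1..n}" for x
    using that unfolding parent_def by (simp only: if_False)
qed

lemma parent_cycle_last: "parent cycle_last = cycle_last"
  using cycle_last_in by (simp add: parent_def)

lemma follows_parent_tail_cycle: "follows parent (tail @ cycle)"
proof (rule follows_cong_distinct[OF follows_tail_cycle distinct_tail_cycle])
  fix x assume x: "x \<in> set (tail @ cycle)" "x \<noteq> last (tail @ cycle)"
  then have "x \<in> {1..n}" "x \<notin> others"
    using tail_in cycle_in tail_not_periodic others_periodic by (auto simp: others_def)
  moreover have "x \<noteq> cycle_last"
    using x(2) cycle_ne last_cycle by simp
  ultimately show "parent x = f x"
    by (simp add: parent_def)
qed

lemma follows_parent_others_path_cycle: "follows parent (others_path @ cycle)"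
proof -
  have "follows parent others_path"
  proof (rule follows_cong[OF follows_successor[OF distinct_others_path, of entry]])
    fix i assume "Suc i < length others_path"
    then have "others_path ! i \<in> others"
      using nth_mem[of i others_path] set_others_path by simp
    then show "parent (others_path ! i) = successor others_path entry (others_path ! i)"
      using others_periodic cycle_last_in_cycle by (auto simp: parent_def others_def)
  qed
  moreover have "follows parent cycle"
    using follows_parent_tail_cycle[unfolded follows_append] by simp
  moreover have "parent (last others_path) = hd cycle" if "others_path \<noteq> []"
  proof -
    have "last others_path \<in> others"
      using last_in_set[OF that] set_others_path by simp
    then have "parent (last others_path) = successor others_path entry (last others_path)"
      using others_periodic cycle_last_in_cycle by (auto simp: parent_def others_def)
    then show ?thesis
      using successor_last[OF distinct_others_path that] hd_cycle by simp
  qed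
  ultimately show ?thesis
    by (simp add: follows_append)
qed

lemma forward_orbit_parent_start: "forward_orbit parent start = set (tail @ cycle)"
  using forward_orbit_follows[OF follows_parent_tail_cycle] cycle_ne last_cycle
    parent_cycle_last cycle_last_in_cycle hd_tail_cycle
  by simp

lemma forward_orbit_parent_third_root: "forward_orbit parent third_root = periodic_points n f"
  using forward_orbit_follows[OF follows_parent_others_path_cycle] cycle_ne last_cycle
    parent_cycle_last cycle_last_in_cycle periodic_points_eq
  by (simp add: third_root_def)

lemma forward_orbit_start: "forward_orbit f start = set (tail @ cycle)"
proof -
  have "f (last (tail @ cycle)) \<in> set (tail @ cycle)"
    using cycle_ne last_cycle f_cycle_last hd_cycle hd_in_set[OF cycle_ne] by simp
  from forward_orbit_follows[OF follows_tail_cycle _ this] show ?thesis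
    using cycle_ne hd_tail_cycle by simp
qed

lemma parent_funpow_aperiodic:
  assumes "\<And>j. j < k \<Longrightarrow> \<not> periodic f ((f ^^ j) v)" "v \<in> {1..n}"
  shows "(parent ^^ k) v = (f ^^ k) v"
  using assms(1)
proof (induction k)
  case (Suc k)
  have "\<not> periodic f ((f ^^ k) v)" "(f ^^ k) v \<in> {1..n}"
    using Suc.prems funpow_in[OF assms(2)] by simp_all
  moreover have "periodic f cycle_last"
    using cycle_last_in_cycle cycle_periodic_points by (auto simp: periodic_points_iff)
  ultimately have "parent ((f ^^ k) v) = f ((f ^^ k) v)"
    using others_periodic by (auto simp: parent_def)
  then show ?case
    using Suc by simp
qed simp

lemma parent_reaches_root:
  assumes "v \<in> {1..n}"
  shows "\<exists>k. (parent ^^ k) v = cycle_last"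
proof -
  define k where "k = (LEAST k. periodic f ((f ^^ k) v))"
  have "periodic f ((f ^^ k) v)"
    unfolding k_def using eventually_periodic_in[OF assms] by (rule LeastI_ex)
  moreover have "\<not> periodic f ((f ^^ j) v)" if "j < k" for j
    using that unfolding k_def by (rule not_less_Least)
  then have "(parent ^^ k) v = (f ^^ k) v"
    using parent_funpow_aperiodic[OF _ assms] by blast
  ultimately have "(parent ^^ k) v \<in> set (others_path @ cycle)"
    using periodic_points_eq funpow_in[OF assms] by (auto simp: periodic_points_iff)
  then obtain j where "(parent ^^ j) ((parent ^^ k) v) = last (others_path @ cycle)"
    using follows_reaches_last[OF follows_parent_others_path_cycle] by blast
  then have "(parent ^^ (j + k)) v = cycle_last"
    using cycle_ne last_cycle by (simp add: funpow_apply_add)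
  then show ?thesis ..
qed

lemma parent_fun: "parent_fun {1..n} cycle_last parent"
  using cycle_last_in parent_in parent_cycle_last parent_reaches_root by unfold_locales

end

definition encode :: "nat \<Rightarrow> (nat \<Rightarrow> nat) \<Rightarrow> (nat \<Rightarrow> nat) \<times> nat \<times> nat \<times> nat" where
  "encode n f = (fun_encoding.parent n f, fun_encoding.cycle_last n f, f (Suc n),
     fun_encoding.third_root n f)"

lemma encode_in: "f \<in> funs n \<Longrightarrow> encode n f \<in> triply_rooted_parent_funs n"
  using fun_encoding.parent_PiE fun_encoding.parent_fun fun_encoding.start_in
    fun_encoding.third_root_in
  by (simp add: encode_def triply_rooted_parent_funs_def fun_encoding_def fun_encoding.start_def)

lemma forward_orbits_encode:
  assumes "f \<in> funs n" "encode n f = (p, r1, r2, r3)"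
  shows "orbit_tail f (n + 1) = forward_orbit p r2" "periodic_points n f = forward_orbit p r3"
proof -
  interpret fun_encoding n f
    using assms(1) by unfold_locales
  show "orbit_tail f (n + 1) = forward_orbit p r2"
    using assms(2) forward_orbit_start forward_orbit_parent_start
    by (simp add: encode_def orbit_tail_eq_forward_orbit start_def)
  show "periodic_points n f = forward_orbit p r3"
    using assms(2) forward_orbit_parent_third_root by (simp add: encode_def)
qed

section \<open>From a triply rooted parent function back to a function\<close>

definition from_sorted :: "'a::linorder list \<Rightarrow> 'a \<Rightarrow> 'a" where
  "from_sorted xs x = the (map_of (zip (sorted_list_of_set (set xs)) xs) x)"

lemma length_sorted_list_of_set_set: "distinct xs \<Longrightarrow> length (sorted_list_of_set (set xs)) = length xs"
  by (simp add: distinct_card)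

lemma from_sorted_nth:
  assumes "distinct xs" "i < length xs"
  shows "from_sorted xs (sorted_list_of_set (set xs) ! i) = xs ! i"
  using map_of_zip_nth[OF length_sorted_list_of_set_set[OF assms(1)] _ assms(2)]
  by (simp add: from_sorted_def)

lemma image_from_sorted:
  assumes "distinct xs"
  shows "from_sorted xs ` set xs = set xs"
proof -
  let ?s = "sorted_list_of_set (set xs)"
  have set_nth: "set ys = (\<lambda>i. ys ! i) ` {..<length ys}" for ys :: "'a list"
    by (auto simp: set_conv_nth image_def)
  have "set xs = (\<lambda>i. ?s ! i) ` {..<length xs}"
    using set_nth[of ?s] length_sorted_list_of_set_set[OF assms] by simp
  then have "from_sorted xs ` set xs = from_sorted xs ` (\<lambda>i. ?s ! i) ` {..<length xs}"
    by (rule arg_cong)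
  also have "\<dots> = (\<lambda>i. from_sorted xs (?s ! i)) ` {..<length xs}"
    by (rule image_image)
  also have "\<dots> = (\<lambda>i. xs ! i) ` {..<length xs}"
    using from_sorted_nth[OF assms] by simp
  also have "\<dots> = set xs"
    using set_nth[of xs] by simp
  finally show ?thesis .
qed

lemma from_sorted_map:
  assumes "finite A" "g ` A = A" "x \<in> A"
  shows "from_sorted (map g (sorted_list_of_set A)) x = g x"
  using assms by (simp add: from_sorted_def map_of_zip_map)

definition unshared_prefix :: "nat \<Rightarrow> (nat \<Rightarrow> nat) \<Rightarrow> nat \<Rightarrow> nat \<Rightarrow> nat list" where
  "unshared_prefix r1 p r2 r3 =
     takeWhile (\<lambda>x. x \<notin> set (path_to_root r1 p r2)) (path_to_root r1 p r3)"

definition shared_suffix :: "nat \<Rightarrow> (nat \<Rightarrow> nat) \<Rightarrow> nat \<Rightarrow> nat \<Rightarrow> nat list" where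
  "shared_suffix r1 p r2 r3 =
     dropWhile (\<lambda>x. x \<notin> set (path_to_root r1 p r2)) (path_to_root r1 p r3)"

definition decode :: "nat \<Rightarrow> (nat \<Rightarrow> nat) \<times> nat \<times> nat \<times> nat \<Rightarrow> nat \<Rightarrow> nat" where
  "decode n = (\<lambda>(p, r1, r2, r3) x.
     if x = Suc n then r2
     else if x = r1 then hd (shared_suffix r1 p r2 r3)
     else if x \<in> set (unshared_prefix r1 p r2 r3) then from_sorted (unshared_prefix r1 p r2 r3) x
     else if x \<in> {1..n} then p x
     else undefined)"

context fun_encoding
begin

lemma path_to_root_start: "path_to_root cycle_last parent start = tail @ cycle"
  using parent_fun.path_to_root_unique[OF parent_fun follows_parent_tail_cycle distinct_tail_cycle]
    cycle_ne last_cycle hd_tail_cycle start_in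
  by simp

lemma path_to_root_third_root: "path_to_root cycle_last parent third_root = others_path @ cycle"
  using parent_fun.path_to_root_unique[OF parent_fun follows_parent_others_path_cycle
      distinct_others_path_cycle] cycle_ne last_cycle third_root_in
  by (simp add: third_root_def)

lemma others_path_disjoint: "x \<in> set others_path \<Longrightarrow> x \<notin> set (tail @ cycle)"
  using set_others_path tail_not_periodic others_periodic by (auto simp: others_def)

lemma unshared_prefix_encode: "unshared_prefix cycle_last parent start third_root = others_path"
proof -
  have "takeWhile (\<lambda>x. x \<notin> set (tail @ cycle)) (others_path @ cycle) = others_path"
    using others_path_disjoint cycle_ne by (simp add: takeWhile_append2 takeWhile_eq_Nil_iff)
  then show ?thesis
    by (simp add: unshared_prefix_def path_to_root_start path_to_root_third_root)
qed

lemma shared_suffix_encode: "shared_suffix cycle_last parent start third_root = cycle"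
proof -
  have "dropWhile (\<lambda>x. x \<notin> set (tail @ cycle)) (others_path @ cycle) = cycle"
    using others_path_disjoint cycle_ne by (simp add: dropWhile_append2 dropWhile_eq_self_iff)
  then show ?thesis
    by (simp add: shared_suffix_def path_to_root_start path_to_root_third_root)
qed

lemma decode_encode: "decode n (encode n f) = f"
proof
  fix x
  have decode: "decode n (encode n f) x =
    (if x = Suc n then start else if x = cycle_last then entry
     else if x \<in> others then f x else if x \<in> {1..n} then parent x else undefined)"
    using unshared_prefix_encode shared_suffix_encode hd_cycle set_others_path
      from_sorted_map[OF finite_others image_others]
    by (simp add: decode_def encode_def start_def others_path_def)
  show "decode n (encode n f) x = f x"
  proof (cases "x \<in> {1..Suc n}")
    case True
    consider "x = Suc n" | "x \<in> {1..n}"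
      using True by fastforce
    then show ?thesis
    proof cases
      case 1
      then show ?thesis
        using decode by (simp add: start_def)
    next
      case 2
      then show ?thesis
        using decode f_cycle_last by (auto simp: parent_def)
    qed
  next
    case False
    then have "x \<noteq> Suc n" "x \<notin> {1..n}"
      by auto
    moreover have "x \<noteq> cycle_last" "x \<notin> others"
      using cycle_last_in others_periodic[of x] \<open>x \<notin> {1..n}\<close> by auto
    ultimately show ?thesis
      using decode f_undefined[OF False] by auto
  qed
qed

end

locale parent_decoding =
  fixes n :: nat and r1 :: nat and p :: "nat \<Rightarrow> nat" and r2 r3 :: nat
  assumes triply_rooted: "(p, r1, r2, r3) \<in> triply_rooted_parent_funs n"

sublocale parent_decoding \<subseteq> P: parent_fun "{1..n}" r1 p
  using triply_rooted by (simp add: triply_rooted_parent_funs_def)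

context parent_decoding
begin

abbreviation path2 :: "nat list" where
  "path2 \<equiv> path_to_root r1 p r2"

abbreviation path3 :: "nat list" where
  "path3 \<equiv> path_to_root r1 p r3"

abbreviation prefix3 :: "nat list" where
  "prefix3 \<equiv> unshared_prefix r1 p r2 r3"

abbreviation shared :: "nat list" where
  "shared \<equiv> shared_suffix r1 p r2 r3"

abbreviation g :: "nat \<Rightarrow> nat" where
  "g \<equiv> decode n (p, r1, r2, r3)"

lemma p_PiE: "p \<in> {1..n} \<rightarrow>\<^sub>E {1..n}"
  and r2_in: "r2 \<in> {1..n}"
  and r3_in: "r3 \<in> {1..n}"
  using triply_rooted by (auto simp: triply_rooted_parent_funs_def)

lemma path3_eq: "path3 = prefix3 @ shared"
  by (simp add: unshared_prefix_def shared_suffix_def)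

lemma r1_in_path2: "r1 \<in> set path2"
  and r1_in_path3: "r1 \<in> set path3"
  using P.last_path_to_root[OF r2_in] P.last_path_to_root[OF r3_in] P.path_to_root_ne
  by (metis last_in_set)+

lemma shared_ne: "shared \<noteq> []"
  using r1_in_path2 r1_in_path3 by (auto simp: shared_suffix_def dropWhile_eq_Nil_conv)

lemma hd_shared_in_path2: "hd shared \<in> set path2"
  using hd_dropWhile[of "\<lambda>x. x \<notin> set path2" path3] shared_ne by (simp add: shared_suffix_def)

lemma path2_in: "set path2 \<subseteq> {1..n}"
  and path3_in: "set path3 \<subseteq> {1..n}"
  using P.set_path_to_root P.forward_orbit_in r2_in r3_in by blast+

lemma hd_shared_in: "hd shared \<in> {1..n}"
  using hd_shared_in_path2 path2_in by blast

lemma shared_eq_path_to_root: "shared = path_to_root r1 p (hd shared)"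
  using P.path_to_root_suffix[OF r3_in path3_eq shared_ne] .

definition tail2 :: "nat list" where
  "tail2 = take (length path2 - length shared) path2"

lemma path2_eq: "path2 = tail2 @ shared"
proof -
  obtain xs where "path2 = xs @ shared"
    using P.path_to_root_through[OF r2_in hd_shared_in_path2] shared_eq_path_to_root by metis
  then show ?thesis
    by (simp add: tail2_def)
qed

lemma distinct_path2: "distinct path2"
  and distinct_path3: "distinct path3"
  using P.distinct_path_to_root r2_in r3_in by blast+

lemma distinct_prefix3: "distinct prefix3"
  and distinct_shared: "distinct shared"
  and prefix3_shared_disjoint: "set prefix3 \<inter> set shared = {}"
  using distinct_path3 path3_eq by (metis distinct_append)+

lemma prefix3_not_in_path2: "x \<in> set prefix3 \<Longrightarrow> x \<notin> set path2"
  by (auto simp: unshared_prefix_def dest: set_takeWhileD)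

lemma tail2_not_in_path3: "x \<in> set tail2 \<Longrightarrow> x \<notin> set path3"
  using distinct_path2 path2_eq prefix3_not_in_path2 path3_eq by fastforce

lemma last_shared: "last shared = r1"
  using shared_eq_path_to_root P.last_path_to_root[OF hd_shared_in] by simp

lemma r1_not_in_prefix3: "r1 \<notin> set prefix3"
  using prefix3_not_in_path2 r1_in_path2 by blast

lemma prefix3_in: "set prefix3 \<subseteq> {1..n}"
  using path3_in path3_eq by auto

lemma decode_Suc_n: "g (Suc n) = r2"
  by (simp add: decode_def)

lemma decode_root: "g r1 = hd shared"
  using P.root_in by (simp add: decode_def)

lemma decode_prefix3: "x \<in> set prefix3 \<Longrightarrow> g x = from_sorted prefix3 x"
  using prefix3_in r1_not_in_prefix3 by (auto simp: decode_def)

lemma decode_parent: "x \<in> {1..n} \<Longrightarrow> x \<noteq> r1 \<Longrightarrow> x \<notin> set prefix3 \<Longrightarrow> g x = p x"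
  by (auto simp: decode_def)

lemma decode_undefined: "x \<notin> {1..Suc n} \<Longrightarrow> g x = undefined"
  using P.root_in prefix3_in by (auto simp: decode_def)

lemma image_decode_prefix3: "g ` set prefix3 = set prefix3"
  using image_from_sorted[OF distinct_prefix3] decode_prefix3 by simp

lemma inj_on_decode_prefix3: "inj_on g (set prefix3)"
  using image_decode_prefix3 by (intro eq_card_imp_inj_on) auto

lemma decode_funs: "g \<in> funs n"
  unfolding funs_def
proof (rule PiE_I)
  fix x assume x: "x \<in> {1..n + 1}"
  consider "x = Suc n" | "x = r1" | "x \<in> set prefix3" | "x \<in> {1..n}" "x \<noteq> r1" "x \<notin> set prefix3"
    using x by fastforce
  then show "g x \<in> {1..n}"
  proof cases
    case 1
    then show ?thesis using decode_Suc_n r2_in by simp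
  next
    case 2
    then show ?thesis using decode_root hd_shared_in by simp
  next
    case 3
    then show ?thesis using image_decode_prefix3 prefix3_in by blast
  next
    case 4
    then show ?thesis using decode_parent P.parent_in by simp
  qed
qed (simp add: decode_undefined)

end

sublocale parent_decoding \<subseteq> G: fun_encoding n g
  by unfold_locales (rule decode_funs)

context parent_decoding
begin

lemma follows_decode_path2: "follows g path2"
proof (rule follows_cong_distinct[OF P.follows_path_to_root distinct_path2])
  fix x assume x: "x \<in> set path2" "x \<noteq> last path2"
  then have "x \<noteq> r1"
    using P.last_path_to_root[OF r2_in] by simp
  moreover have "x \<in> {1..n}" "x \<notin> set prefix3"
    using x(1) path2_in prefix3_not_in_path2 by auto
  ultimately show "g x = p x"
    by (simp add: decode_parent)
qed

lemma follows_decode_shared: "follows g shared"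
  using follows_decode_path2[unfolded path2_eq follows_append] by simp

lemma funpow_decode_shared: "i < length shared \<Longrightarrow> (g ^^ i) (hd shared) = shared ! i"
  using follows_funpow_hd[OF follows_decode_shared] .

lemma funpow_decode_length_shared: "(g ^^ length shared) (hd shared) = hd shared"
proof -
  have "(g ^^ (length shared - 1)) (hd shared) = r1"
    using funpow_decode_shared[of "length shared - 1"] shared_ne last_shared
    by (simp add: last_conv_nth)
  then have "(g ^^ Suc (length shared - 1)) (hd shared) = g r1"
    by simp
  then show ?thesis
    using decode_root shared_ne by simp
qed

lemma shared_periodic: "x \<in> set shared \<Longrightarrow> periodic g x"
proof -
  have "periodic g (hd shared)"
  proof -
    have "length shared \<ge> 1"
      using shared_ne by (cases shared) auto
    then show ?thesis
      unfolding periodic_def using funpow_decode_length_shared by blast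
  qed
  moreover assume "x \<in> set shared"
  then obtain i where "i < length shared" "x = shared ! i"
    by (auto simp: in_set_conv_nth)
  then have "x = (g ^^ i) (hd shared)"
    using funpow_decode_shared by simp
  ultimately show ?thesis
    using periodic_funpow by simp
qed

text \<open>The points of \<open>prefix3\<close> that are not periodic under \<open>g\<close> would never leave \<open>prefix3\<close>,
  which \<open>g\<close> permutes, so all of them are periodic.\<close>

lemma prefix3_periodic:
  assumes x: "x \<in> set prefix3"
  shows "periodic g x"
proof (rule ccontr)
  assume "\<not> periodic g x"
  define Per where "Per = {z \<in> set prefix3. periodic g z}"
  have "Per \<subseteq> set prefix3"
    by (auto simp: Per_def)
  have "g ` Per \<subseteq> Per"
    using image_decode_prefix3 periodic_apply by (auto simp: Per_def)
  then have image_Per: "g ` Per = Per"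
    using inj_on_subset[OF inj_on_decode_prefix3 \<open>Per \<subseteq> set prefix3\<close>]
      finite_subset[OF \<open>Per \<subseteq> set prefix3\<close>]
    by (intro endo_inj_surj) auto
  have step: "g y \<in> set prefix3 - Per" if "y \<in> set prefix3 - Per" for y
  proof -
    have "g y \<in> set prefix3"
      using that image_decode_prefix3 by blast
    moreover have "g y \<notin> Per"
    proof
      assume "g y \<in> Per"
      then obtain z where "z \<in> Per" "g z = g y"
        using image_Per by (metis imageE)
      then have "z = y"
        using inj_on_decode_prefix3 \<open>Per \<subseteq> set prefix3\<close> that by (auto simp: inj_on_def)
      then show False
        using \<open>z \<in> Per\<close> that by simp
    qed
    ultimately show ?thesis
      by simp
  qed
  have "(g ^^ k) x \<in> set prefix3 - Per" for k
  proof (induction k)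
    case 0
    then show ?case using x \<open>\<not> periodic g x\<close> by (simp add: Per_def)
  next
    case (Suc k)
    then show ?case using step by simp
  qed
  moreover obtain k where "periodic g ((g ^^ k) x)"
    using G.eventually_periodic_in x prefix3_in by blast
  ultimately show False
    by (auto simp: Per_def)
qed

lemma forward_orbit_decode_hd_shared: "forward_orbit g (hd shared) = set shared"
proof -
  have "g (last shared) \<in> set shared"
    using last_shared decode_root hd_in_set[OF shared_ne] by simp
  then show ?thesis
    by (rule forward_orbit_follows[OF follows_decode_shared shared_ne])
qed

lemma path3_closed: "y \<in> set path3 \<Longrightarrow> g y \<in> set path3"
  using image_decode_prefix3 forward_orbit_closed[of y g "hd shared"]
  by (auto simp: path3_eq forward_orbit_decode_hd_shared)

lemma decode_funpow_outside:
  assumes "x \<in> {1..n}" "\<And>i. i < k \<Longrightarrow> (g ^^ i) x \<notin> set path3"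
  shows "(g ^^ k) x = (p ^^ k) x"
  using assms(2)
proof (induction k)
  case (Suc k)
  then have IH: "(g ^^ k) x = (p ^^ k) x"
    by simp
  moreover have "(g ^^ k) x \<notin> set path3"
    using Suc.prems[of k] by simp
  ultimately have "(p ^^ k) x \<noteq> r1" "(p ^^ k) x \<notin> set prefix3"
    using r1_in_path3 path3_eq by auto
  then have "g ((p ^^ k) x) = p ((p ^^ k) x)"
    using decode_parent P.funpow_in[OF assms(1)] by simp
  then show ?case
    using IH by simp
qed simp

lemma funpow_path3: "y \<in> set path3 \<Longrightarrow> (g ^^ k) y \<in> set path3"
  by (induction k) (simp_all add: path3_closed)

lemma not_periodic_outside:
  assumes "x \<in> {1..n}" "x \<notin> set path3"
  shows "\<not> periodic g x"
proof
  assume "periodic g x"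
  then obtain j where j: "j \<ge> 1" "(g ^^ j) x = x"
    unfolding periodic_def by auto
  show False
  proof (cases "\<exists>k \<le> j. (g ^^ k) x \<in> set path3")
    case True
    then obtain k where "k \<le> j" "(g ^^ k) x \<in> set path3"
      by blast
    then have "(g ^^ (j - k)) ((g ^^ k) x) \<in> set path3"
      by (simp add: funpow_path3)
    then show False
      using \<open>k \<le> j\<close> j(2) assms(2) by (simp add: funpow_apply_add)
  next
    case False
    then have "(p ^^ j) x = x"
      using decode_funpow_outside[OF assms(1)] j(2) by simp
    then have "x = r1"
      using P.funpow_eq_self_imp_root[OF assms(1) _ j(1)] by simp
    then show False
      using r1_in_path3 assms(2) by simp
  qed
qed

lemma periodic_points_decode: "periodic_points n g = set path3"
proof
  show "periodic_points n g \<subseteq> set path3"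
  proof
    fix x assume "x \<in> periodic_points n g"
    then have "x \<in> {1..n}" "periodic g x"
      by (simp_all add: G.periodic_points_iff)
    then show "x \<in> set path3"
      using not_periodic_outside by meson
  qed
  show "set path3 \<subseteq> periodic_points n g"
    using prefix3_periodic shared_periodic path3_eq path3_in by (auto simp: G.periodic_points_iff)
qed

lemma start_decode: "G.start = r2"
  unfolding G.start_def using decode_Suc_n .

lemma funpow_decode_path2: "i < length path2 \<Longrightarrow> (g ^^ i) r2 = path2 ! i"
  using follows_funpow_hd[OF follows_decode_path2] P.hd_path_to_root by metis

lemma nth_path2_length_tail2: "path2 ! length tail2 = hd shared"
  using path2_eq shared_ne by (simp add: nth_append hd_conv_nth)

lemma length_tail2_less: "length tail2 < length path2"
  using path2_eq shared_ne by simp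

lemma tail_len_decode: "G.tail_len = length tail2"
  unfolding G.tail_len_def start_decode
proof (rule Least_equality)
  show "periodic g ((g ^^ length tail2) r2)"
    using funpow_decode_path2[OF length_tail2_less] nth_path2_length_tail2
      shared_periodic hd_in_set[OF shared_ne] by simp
next
  fix k assume k: "periodic g ((g ^^ k) r2)"
  show "length tail2 \<le> k"
  proof (rule ccontr)
    assume "\<not> length tail2 \<le> k"
    then have "(g ^^ k) r2 = tail2 ! k" "k < length path2"
      using funpow_decode_path2[of k] path2_eq by (simp_all add: nth_append)
    moreover have "tail2 ! k \<in> set tail2"
      using \<open>\<not> length tail2 \<le> k\<close> by simp
    then have "tail2 ! k \<notin> set path3" "tail2 ! k \<in> {1..n}"
      using tail2_not_in_path3 path2_in path2_eq by auto
    ultimately show False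
      using k not_periodic_outside by simp
  qed
qed

lemma entry_decode: "G.entry = hd shared"
  unfolding G.entry_def tail_len_decode start_decode
  using funpow_decode_path2[OF length_tail2_less] nth_path2_length_tail2 by simp

lemma cycle_len_decode: "G.cycle_len = length shared"
  unfolding G.cycle_len_def period_def entry_decode
proof (rule Least_equality)
  show "1 \<le> length shared \<and> (g ^^ length shared) (hd shared) = hd shared"
    using shared_ne funpow_decode_length_shared by (cases shared) auto
next
  fix k assume k: "1 \<le> k \<and> (g ^^ k) (hd shared) = hd shared"
  show "length shared \<le> k"
  proof (rule ccontr)
    assume "\<not> length shared \<le> k"
    then have "shared ! k = shared ! 0"
      using k funpow_decode_shared[of k] hd_conv_nth[OF shared_ne] by simp
    then show False
      using nth_eq_iff_index_eq[OF distinct_shared, of k 0] k \<open>\<not> length shared \<le> k\<close> shared_ne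
      by simp
  qed
qed

lemma cycle_decode: "G.cycle = shared"
  by (rule nth_equalityI)
    (simp_all add: G.length_cycle cycle_len_decode G.nth_cycle entry_decode funpow_decode_shared)

lemma cycle_last_decode: "G.cycle_last = r1"
  using G.last_cycle cycle_decode last_shared by simp

lemma others_decode: "G.others = set prefix3"
  unfolding G.others_def periodic_points_decode cycle_decode path3_eq
  using prefix3_shared_disjoint by auto

lemma others_path_decode: "G.others_path = prefix3"
proof (rule nth_equalityI)
  show "length G.others_path = length prefix3"
    using length_sorted_list_of_set_set[OF distinct_prefix3]
    by (simp add: G.others_path_def others_decode)
next
  fix i assume "i < length G.others_path"
  then have "i < length prefix3"
    using length_sorted_list_of_set_set[OF distinct_prefix3]
    by (simp add: G.others_path_def others_decode)
  moreover have "sorted_list_of_set (set prefix3) ! i \<in> set prefix3"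
    using calculation length_sorted_list_of_set_set[OF distinct_prefix3]
    by (metis nth_mem set_sorted_list_of_set finite_set)
  ultimately show "G.others_path ! i = prefix3 ! i"
    using from_sorted_nth[OF distinct_prefix3] decode_prefix3
      length_sorted_list_of_set_set[OF distinct_prefix3]
    by (simp add: G.others_path_def others_decode)
qed

lemma third_root_decode: "G.third_root = r3"
  unfolding G.third_root_def others_path_decode cycle_decode
  using path3_eq P.hd_path_to_root by metis

lemma parent_decode: "G.parent = p"
proof
  fix x
  show "G.parent x = p x"
  proof (cases "x \<in> {1..n}")
    case False
    then show ?thesis
      using p_PiE by (auto simp: G.parent_def PiE_def extensional_def)
  next
    case x: True
    consider "x = r1" | "x \<in> set prefix3" | "x \<noteq> r1" "x \<notin> set prefix3"
      by blast
    then show ?thesis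
    proof cases
      case 1
      then show ?thesis
        using x cycle_last_decode P.parent_root by (simp add: G.parent_def)
    next
      case 2
      then obtain i where i: "i < length prefix3" "x = prefix3 ! i"
        by (auto simp: in_set_conv_nth)
      have "G.parent x = successor prefix3 (hd shared) x"
        using x 2 r1_not_in_prefix3 cycle_last_decode others_decode others_path_decode entry_decode
        by (auto simp: G.parent_def)
      also have "\<dots> = path3 ! Suc i"
        using successor_nth[OF distinct_prefix3 i(1)] i path3_eq shared_ne
        by (auto simp: nth_append hd_conv_nth)
      also have "\<dots> = p (path3 ! i)"
      proof -
        have "0 < length shared"
          using shared_ne by simp
        then have "Suc i < length path3"
          using i(1) unfolding path3_eq length_append by linarith
        then show ?thesis
          using P.follows_path_to_root[of r3] by (simp add: follows_def)
      qed
      also have "path3 ! i = x"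
        using i path3_eq by (simp add: nth_append)
      finally show ?thesis .
    next
      case 3
      then show ?thesis
        using x decode_parent cycle_last_decode others_decode by (simp add: G.parent_def)
    qed
  qed
qed

lemma encode_decode: "encode n g = (p, r1, r2, r3)"
  using parent_decode cycle_last_decode decode_Suc_n third_root_decode by (simp add: encode_def)

end

lemma bij_betw_encode: "bij_betw (encode n) (funs n) (triply_rooted_parent_funs n)"
proof (rule bij_betw_byWitness[where f' = "decode n"])
  show "\<forall>f \<in> funs n. decode n (encode n f) = f"
    using fun_encoding.decode_encode by (simp add: fun_encoding_def)
  show "\<forall>P \<in> triply_rooted_parent_funs n. encode n (decode n P) = P"
    using parent_decoding.encode_decode by (force simp: parent_decoding_def)
  show "encode n ` funs n \<subseteq> triply_rooted_parent_funs n"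
    using encode_in by blast
  show "decode n ` triply_rooted_parent_funs n \<subseteq> funs n"
    using parent_decoding.decode_funs by (force simp: parent_decoding_def)
qed

theorem theorem2:
  fixes n :: nat
  assumes "n \<ge> 1"
  shows "\<exists>\<phi>. bij_betw \<phi> (funs n) (triply_rooted_trees n) \<and>
    (\<forall>f\<in>funs n. case \<phi> f of (E, r1, r2, r3) \<Rightarrow>
        orbit_tail f (n + 1) = ancestors E r1 r2 \<and>
        periodic_points n f = ancestors E r1 r3)"
proof (intro exI conjI ballI)
  show "bij_betw (to_tree n \<circ> encode n) (funs n) (triply_rooted_trees n)"
    using bij_betw_trans[OF bij_betw_encode bij_betw_to_tree] .
next
  fix f assume f: "f \<in> funs n"
  obtain p r1 r2 r3 where P: "encode n f = (p, r1, r2, r3)"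
    by (cases "encode n f")
  then have "(p, r1, r2, r3) \<in> triply_rooted_parent_funs n"
    using encode_in[OF f] by simp
  then have "ancestors (parent_edges {1..n} r1 p) r1 r2 = forward_orbit p r2"
    and "ancestors (parent_edges {1..n} r1 p) r1 r3 = forward_orbit p r3"
    using parent_fun.ancestors_parent_edges by (auto simp: triply_rooted_parent_funs_def)
  then show "case (to_tree n \<circ> encode n) f of (E, r1, r2, r3) \<Rightarrow>
      orbit_tail f (n + 1) = ancestors E r1 r2 \<and> periodic_points n f = ancestors E r1 r3"
    using P forward_orbits_encode[OF f P] by (simp add: to_tree_def)
qed

end
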